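(* Let $\mathcal{H}$ be a collection of nonempty loopless graphs, each with an even number of edges. Let $n,m\geq 2$ be integers with $n\geq 4^m$, and let $\mathcal{G}\subseteq\mathbb{F}_2^{\binom{[n]}{2}}$ be an $\mathcal{H}$-code with $\mathbb{P}[\mathcal{G}]=\delta_n(\mathcal{H})$. Then $$\big\|\widehat{\big(\mathbb{1}_{\mathcal{G}}-\mathbb{P}[\mathcal{G}]\big)}\big\|_{\ell_\infty}\leq\delta_m(\mathcal{H})-\delta_n(\mathcal{H}).$$
   Context: Graphs: for a nonempty finite set $V$, $\binom{V}{\leq 2}$ denotes the nonempty subsets of $V$ of size at most 2 and $\binom{V}{2}$ those of size 2. A graph on $V$ is a subset of $\binom{V}{\leq 2}$ (size-2 elements are edges, size-1 elements self-loops); loopless means no self-loops. $V(G)$ is the union of members of $G$. Graphs $G,H$ are isomorphic if there is a bijection $\phi\colon V(G)\to V(H)$ with $\{x,y\}\in G\iff\{\phi(x),\phi(y)\}\in H$ for all $x,y\in V(G)$. $G_1+G_2$ is symmetric difference. Loopless graphs on $[n]$ are identified with $\mathbb{F}_2^{\binom{[n]}{2}}$; $\mathbb{P}$ is the uniform probability measure there. An $\mathcal{H}$-code is a family $\mathcal{G}$ of graphs on a common vertex set such that $G_1+G_2$ is not isomorphic to any graph of $\mathcal{H}$ for all $G_1,G_2\in\mathcal{G}$; $\delta_n(\mathcal{H})$ is the maximum density $\mathbb{P}[\mathcal{G}]$ of an $\mathcal{H}$-code $\mathcal{G}\subseteq\mathbb{F}_2^{\binom{[n]}{2}}$. Fourier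 transform on $\mathbb{F}_2^{\mathcal{I}}$: $\widehat f(\xi)=\mathbb{E}_x[f(x)(-1)^{|x\cap\xi|}]$ (expectation w.r.t. uniform measure), and $\|\widehat f\|_{\ell_\infty}=\max_\xi|\widehat f(\xi)|$. *)

theory Defs
  imports Complex_Main
begin

text \<open>Graphs are sets of nonempty vertex sets of size at most 2; V(G) is the union.\<close>

definition verts :: "'a set set \<Rightarrow> 'a set" where
  "verts G = \<Union> G"

definition loopless_graph :: "'a set set \<Rightarrow> bool" where
  "loopless_graph G \<longleftrightarrow> finite G \<and> (\<forall>e\<in>G. card e = 2)"

definition graph_iso :: "'a set set \<Rightarrow> 'b set set \<Rightarrow> bool" where
  "graph_iso G H \<longleftrightarrow> (\<exists>\<phi>. bij_betw \<phi> (verts G) (verts H) \<and>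
      (\<forall>x\<in>verts G. \<forall>y\<in>verts G. {x, y} \<in> G \<longleftrightarrow> {\<phi> x, \<phi> y} \<in> H))"

definition gsum :: "'a set set \<Rightarrow> 'a set set \<Rightarrow> 'a set set" where
  "gsum G1 G2 = (G1 - G2) \<union> (G2 - G1)"

text \<open>Edges of the complete graph on [n] = {1..n}; loopless graphs on [n] are subsets.\<close>
definition edges :: "nat \<Rightarrow> nat set set" where
  "edges n = {e. e \<subseteq> {1..n} \<and> card e = 2}"

definition is_code :: "'b set set set \<Rightarrow> 'a set set set \<Rightarrow> bool" where
  "is_code \<H> \<G> \<longleftrightarrow> (\<forall>G1\<in>\<G>. \<forall>G2\<in>\<G>. \<forall>H\<in>\<H>. \<not> graph_iso (gsum G1 G2) H)"

definition prob :: "nat \<Rightarrow> nat set set set \<Rightarrow> real" where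
  "prob n \<G> = real (card \<G>) / 2 ^ card (edges n)"

definition delta :: "nat \<Rightarrow> 'b set set set \<Rightarrow> real" where
  "delta n \<H> = Max {prob n \<G> | \<G>. \<G> \<subseteq> Pow (edges n) \<and> is_code \<H> \<G>}"

definition fourier :: "nat \<Rightarrow> (nat set set \<Rightarrow> real) \<Rightarrow> nat set set \<Rightarrow> real" where
  "fourier n f \<xi> = (\<Sum>x\<in>Pow (edges n). f x * (-1) ^ card (x \<inter> \<xi>)) / 2 ^ card (edges n)"

definition linf_fourier :: "nat \<Rightarrow> (nat set set \<Rightarrow> real) \<Rightarrow> real" where
  "linf_fourier n f = Max {\<bar>fourier n f \<xi>\<bar> | \<xi>. \<xi> \<subseteq> edges n}"

end

theory Submission
  imports Defs "HOL-Library.Ramsey"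
begin

text \<open>
  Write N for the number of edges of K_n and, for a nonempty \<xi>, split \<G> into the classes
  \<G>_0, \<G>_1 of graphs x with |x \<inter> \<xi>| even resp. odd. Since \<xi> \<noteq> {}, the character of \<xi>
  sums to zero, so the Fourier coefficient of 1_\<G> - P[\<G>] at \<xi> is (|\<G>_0| - |\<G>_1|) / 2^N,
  and the claim follows from 2 |\<G>_b| \<le> \<delta>_m 2^N for both b, because |\<G>_0| + |\<G>_1| = P[\<G>] 2^N.

  To bound |\<G>_b|, Ramsey's theorem (n \<ge> 4^m \<ge> binom(2m, m)) gives an m-set R on which \<xi>
  is complete or empty. Graphs of a code that agree outside K = [R]^2 differ only inside K,
  so they form a code on a copy of K_m and there are at most \<delta>_m 2^(binom(m, 2)) of them.
  If K \<subseteq> \<xi>, then within such a fiber the parity of x \<inter> K is fixed, and a code of constant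
  parity can be doubled by adding one fixed edge to each member: sums across the two halves
  have an odd number of edges, while every graph of \<H> has an even number. This halves the
  fiber bound. If K \<inter> \<xi> = {}, the part outside K already has the parity b on \<xi>, so only half
  of the possible outside parts occur. At \<xi> = {} the coefficient vanishes, and the same fiber
  count gives P[\<G>] \<le> \<delta>_m.
\<close>

section \<open>Isomorphism and symmetric difference\<close>

lemma graph_iso_trans:
  assumes "graph_iso G G'" and "graph_iso G' H"
  shows "graph_iso G H"
proof -
  obtain f where f: "bij_betw f (verts G) (verts G')"
    and f_edges: "\<forall>x\<in>verts G. \<forall>y\<in>verts G. {x, y} \<in> G \<longleftrightarrow> {f x, f y} \<in> G'"
    using assms(1) unfolding graph_iso_def by blast
  obtain g where g: "bij_betw g (verts G') (verts H)"
    and g_edges: "\<forall>x\<in>verts G'. \<forall>y\<in>verts G'. {x, y} \<in> G' \<longleftrightarrow> {g x, g y} \<in> H"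
    using assms(2) unfolding graph_iso_def by blast
  have "\<forall>x\<in>verts G. \<forall>y\<in>verts G. {x, y} \<in> G \<longleftrightarrow> {(g \<circ> f) x, (g \<circ> f) y} \<in> H"
    using f_edges g_edges bij_betwE[OF f] by auto
  with bij_betw_trans[OF f g] show ?thesis
    unfolding graph_iso_def by blast
qed

lemma graph_iso_image:
  assumes "inj_on f (verts G)"
  shows "graph_iso G ((`) f ` G)"
proof -
  have "{x, y} \<in> G \<longleftrightarrow> {f x, f y} \<in> (`) f ` G" if xy: "x \<in> verts G" "y \<in> verts G" for x y
  proof
    assume "{x, y} \<in> G"
    then have "f ` {x, y} \<in> (`) f ` G"
      by (rule imageI)
    then show "{f x, f y} \<in> (`) f ` G"
      by simp
  next
    assume "{f x, f y} \<in> (`) f ` G"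
    then obtain e where "e \<in> G" and e: "f ` e = f ` {x, y}"
      by auto
    have "e \<subseteq> verts G" and "{x, y} \<subseteq> verts G"
      using \<open>e \<in> G\<close> xy by (auto simp: verts_def)
    then have "e = {x, y}"
      using e inj_on_image_eq_iff[OF assms] by (simp only:)
    with \<open>e \<in> G\<close> show "{x, y} \<in> G" by simp
  qed
  moreover have "bij_betw f (verts G) (verts ((`) f ` G))"
    using inj_on_imp_bij_betw[OF assms] by (simp add: verts_def image_Union)
  ultimately show ?thesis
    unfolding graph_iso_def by blast
qed

lemma graph_iso_card_eq:
  assumes "graph_iso G H" and "\<forall>e\<in>G. card e = 2" and "\<forall>e\<in>H. card e = 2"
  shows "card G = card H"
proof -
  obtain f where f: "bij_betw f (verts G) (verts H)"
    and f_edges: "\<forall>x\<in>verts G. \<forall>y\<in>verts G. {x, y} \<in> G \<longleftrightarrow> {f x, f y} \<in> H"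
    using assms(1) unfolding graph_iso_def by blast
  have "G \<subseteq> Pow (verts G)"
    by (auto simp: verts_def)
  then have inj: "inj_on ((`) f) G"
    using inj_on_image_Pow[OF bij_betw_imp_inj_on[OF f]] inj_on_subset by blast
  have "(`) f ` G \<subseteq> H"
  proof
    fix h assume "h \<in> (`) f ` G"
    then obtain e where "e \<in> G" "h = f ` e"
      by blast
    moreover obtain x y where "e = {x, y}"
      using assms(2) \<open>e \<in> G\<close> card_2_iff by metis
    moreover have "x \<in> verts G" "y \<in> verts G"
      using \<open>e \<in> G\<close> \<open>e = {x, y}\<close> by (auto simp: verts_def)
    ultimately show "h \<in> H"
      using f_edges by simp
  qed
  moreover have "H \<subseteq> (`) f ` G"
  proof
    fix h assume "h \<in> H"
    then obtain u v where uv: "h = {u, v}"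
      using assms(3) card_2_iff by metis
    then have "u \<in> f ` verts G" "v \<in> f ` verts G"
      using \<open>h \<in> H\<close> bij_betw_imp_surj_on[OF f] by (auto simp: verts_def)
    then obtain x y where "x \<in> verts G" "y \<in> verts G" "u = f x" "v = f y"
      by blast
    then have "{x, y} \<in> G" and "h = f ` {x, y}"
      using \<open>h \<in> H\<close> uv f_edges by simp_all
    then show "h \<in> (`) f ` G"
      by (rule rev_image_eqI)
  qed
  ultimately show ?thesis
    using card_image[OF inj] by simp
qed

lemma card_gsum:
  assumes "finite A" and "finite B"
  shows "card (gsum A B) + 2 * card (A \<inter> B) = card A + card B"
proof -
  have "gsum A B \<union> (A \<inter> B) = A \<union> B" and "gsum A B \<inter> (A \<inter> B) = {}"
    by (auto simp: gsum_def)
  moreover have "finite (gsum A B)"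
    using assms by (simp add: gsum_def)
  ultimately show ?thesis
    using card_Un_Int[OF assms] card_Un_disjoint[of "gsum A B" "A \<inter> B"] assms
    by simp
qed

lemma even_card_gsum:
  assumes "finite A" and "finite B"
  shows "even (card (gsum A B)) \<longleftrightarrow> (even (card A) \<longleftrightarrow> even (card B))"
  using arg_cong[OF card_gsum[OF assms], of even] by simp

lemma gsum_translate: "gsum (gsum A C) (gsum B C) = gsum A B"
  by (auto simp: gsum_def)

lemma gsum_gsum_cancel: "gsum (gsum A C) C = A"
  by (auto simp: gsum_def)

lemma not_graph_iso_if_odd_even:
  assumes "\<forall>e\<in>G. card e = 2" and "odd (card G)"
    and "loopless_graph H" and "even (card H)"
  shows "\<not> graph_iso G H"
  using graph_iso_card_eq[OF _ assms(1)] assms(2-4) unfolding loopless_graph_def by metis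

section \<open>Codes\<close>

lemma is_code_subset: "is_code \<H> \<G> \<Longrightarrow> \<C> \<subseteq> \<G> \<Longrightarrow> is_code \<H> \<C>"
  unfolding is_code_def by blast

lemma is_code_image:
  assumes f: "inj_on f V" and "\<C> \<subseteq> Pow (Pow V)" and "is_code \<H> \<C>"
  shows "is_code \<H> ((`) ((`) f) ` \<C>)"
  unfolding is_code_def
proof (intro ballI notI)
  fix Y1 Y2 H
  assume "Y1 \<in> (`) ((`) f) ` \<C>" "Y2 \<in> (`) ((`) f) ` \<C>" "H \<in> \<H>"
    and iso: "graph_iso (gsum Y1 Y2) H"
  then obtain x1 x2 where x: "x1 \<in> \<C>" "x2 \<in> \<C>" "Y1 = (`) f ` x1" "Y2 = (`) f ` x2"
    by blast
  have sub: "x1 \<subseteq> Pow V" "x2 \<subseteq> Pow V"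
    using x assms(2) by auto
  have inj: "inj_on ((`) f) (Pow V)"
    using inj_on_image_Pow[OF f] .
  have "(`) f ` (x1 - x2) = Y1 - Y2" "(`) f ` (x2 - x1) = Y2 - Y1"
    unfolding x by (rule inj_on_image_set_diff[OF inj]; use sub in blast)+
  then have "gsum Y1 Y2 = (`) f ` gsum x1 x2"
    unfolding gsum_def image_Un by simp
  moreover have "verts (gsum x1 x2) \<subseteq> V"
    using sub by (auto simp: gsum_def verts_def)
  then have "inj_on f (verts (gsum x1 x2))"
    using f inj_on_subset by blast
  ultimately have "graph_iso (gsum x1 x2) (gsum Y1 Y2)"
    using graph_iso_image by metis
  then have "graph_iso (gsum x1 x2) H"
    using iso by (rule graph_iso_trans)
  with x \<open>H \<in> \<H>\<close> \<open>is_code \<H> \<C>\<close> show False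
    unfolding is_code_def by blast
qed

definition fiber :: "'a set set set \<Rightarrow> 'a set set \<Rightarrow> 'a set set \<Rightarrow> 'a set set set" where
  "fiber \<A> K y = {x \<in> \<A>. x - K = y}"

lemma inj_on_Int_fiber: "inj_on (\<lambda>x. x \<inter> K) (fiber \<A> K y)"
  by (rule inj_onI) (auto simp: fiber_def)

lemma is_code_Int_fiber:
  assumes "is_code \<H> \<A>"
  shows "is_code \<H> ((\<lambda>x. x \<inter> K) ` fiber \<A> K y)"
  unfolding is_code_def
proof (intro ballI)
  fix G1 G2 H
  assume "G1 \<in> (\<lambda>x. x \<inter> K) ` fiber \<A> K y" "G2 \<in> (\<lambda>x. x \<inter> K) ` fiber \<A> K y" "H \<in> \<H>"
  then obtain x1 x2 where x: "x1 \<in> \<A>" "x2 \<in> \<A>" "x1 - K = x2 - K" "G1 = x1 \<inter> K" "G2 = x2 \<inter> K"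
    unfolding fiber_def by blast
  then have "gsum G1 G2 = gsum x1 x2"
    unfolding gsum_def by blast
  with x(1,2) \<open>H \<in> \<H>\<close> assms show "\<not> graph_iso (gsum G1 G2) H"
    unfolding is_code_def by simp
qed

lemma is_code_parity_double:
  assumes \<H>: "\<forall>H\<in>\<H>. loopless_graph H \<and> even (card H)"
    and E: "finite E" "\<forall>e\<in>E. card e = 2" "e \<in> E"
    and \<C>: "\<C> \<subseteq> Pow E" "is_code \<H> \<C>" "\<forall>x\<in>\<C>. even (card x) = b"
  shows "is_code \<H> (\<C> \<union> (\<lambda>x. gsum x {e}) ` \<C>)"
  unfolding is_code_def
proof (intro ballI notI)
  let ?t = "\<lambda>x. gsum x {e}"
  fix G1 G2 H
  assume G: "G1 \<in> \<C> \<union> ?t ` \<C>" "G2 \<in> \<C> \<union> ?t ` \<C>" and "H \<in> \<H>"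
    and iso: "graph_iso (gsum G1 G2) H"
  have fin: "finite x" if "x \<in> \<C>" for x
    using that \<C>(1) E(1) finite_subset by blast
  have "G1 \<subseteq> E" "G2 \<subseteq> E"
    using G \<C>(1) E(3) by (auto simp: gsum_def)
  have parity_t: "even (card (?t x)) \<longleftrightarrow> \<not> b" if "x \<in> \<C>" for x
    using even_card_gsum[OF fin[OF that], of "{e}"] \<C>(3) that by simp
  have "G1 \<in> \<C> \<and> G2 \<in> \<C> \<or> G1 \<in> ?t ` \<C> \<and> G2 \<in> ?t ` \<C> \<or> even (card G1) \<noteq> even (card G2)"
    using G parity_t \<C>(3) by auto
  then show False
  proof (elim disjE)
    assume "G1 \<in> ?t ` \<C> \<and> G2 \<in> ?t ` \<C>"
    then obtain x1 x2 where "x1 \<in> \<C>" "x2 \<in> \<C>" "gsum G1 G2 = gsum x1 x2"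
      using gsum_translate by blast
    then show False
      using iso \<C>(2) \<open>H \<in> \<H>\<close> unfolding is_code_def by metis
  next
    assume "even (card G1) \<noteq> even (card G2)"
    moreover have "finite G1" "finite G2"
      using \<open>G1 \<subseteq> E\<close> \<open>G2 \<subseteq> E\<close> E(1) finite_subset by blast+
    ultimately have "odd (card (gsum G1 G2))"
      using even_card_gsum by blast
    moreover have "\<forall>e\<in>gsum G1 G2. card e = 2"
      using \<open>G1 \<subseteq> E\<close> \<open>G2 \<subseteq> E\<close> E(2) by (auto simp: gsum_def)
    ultimately show False
      using not_graph_iso_if_odd_even iso \<H> \<open>H \<in> \<H>\<close> by blast
  qed (use iso \<C>(2) \<open>H \<in> \<H>\<close> in \<open>unfold is_code_def, blast\<close>)
qed

section \<open>Codes on a copy of K_m\<close>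

lemma edges_eq_nsets: "edges n = [{1..n}]\<^bsup>2\<^esup>"
proof -
  have "finite e" if "card e = 2" for e :: "nat set"
    using that by (intro card_ge_0_finite) simp
  then show ?thesis
    unfolding edges_def nsets_def by blast
qed

lemma finite_edges: "finite (edges n)"
  by (simp add: edges_eq_nsets finite_imp_finite_nsets)

lemma card_edges: "card (edges n) = n choose 2"
  by (simp add: edges_eq_nsets)

lemma prob_le_delta:
  assumes "\<C> \<subseteq> Pow (edges m)" and "is_code \<H> \<C>"
  shows "prob m \<C> \<le> delta m \<H>"
proof -
  have "finite {prob m \<G> | \<G>. \<G> \<subseteq> Pow (edges m) \<and> is_code \<H> \<G>}"
    by (rule finite_subset[of _ "prob m ` Pow (Pow (edges m))"]) (use finite_edges in auto)
  with assms show ?thesis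
    unfolding delta_def by (intro Max_ge) auto
qed

lemma card_code_le_delta:
  assumes "finite S" and "card S = m" and "\<C> \<subseteq> Pow ([S]\<^bsup>2\<^esup>)" and "is_code \<H> \<C>"
  shows "real (card \<C>) \<le> delta m \<H> * 2 ^ (m choose 2)"
proof -
  obtain h where "bij_betw h {1..m} S"
    using ex_bij_betw_nat_finite_1[OF assms(1)] assms(2) by blast
  then obtain f where f: "bij_betw f S {1..m}"
    using bij_betw_inv_into by blast
  let ?g = "(`) f"
  have g: "bij_betw ?g ([S]\<^bsup>2\<^esup>) (edges m)"
    unfolding edges_eq_nsets by (rule bij_betw_nsets[OF f])
  have "\<C> \<subseteq> Pow (Pow S)"
    using assms(3) by (auto simp: nsets_def)
  then have "is_code \<H> ((`) ?g ` \<C>)"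
    using is_code_image[OF bij_betw_imp_inj_on[OF f]] assms(4) by blast
  moreover have "(`) ?g ` \<C> \<subseteq> Pow (edges m)"
    using assms(3) bij_betw_imp_surj_on[OF g] by blast
  ultimately have "prob m ((`) ?g ` \<C>) \<le> delta m \<H>"
    by (rule prob_le_delta[rotated])
  moreover have "card ((`) ?g ` \<C>) = card \<C>"
    using inj_on_subset[OF inj_on_image_Pow[OF bij_betw_imp_inj_on[OF g]] assms(3)]
    by (rule card_image)
  ultimately show ?thesis
    by (simp add: prob_def card_edges divide_le_eq)
qed

lemma card_parity_code_le_delta:
  assumes \<H>: "\<forall>H\<in>\<H>. loopless_graph H \<and> even (card H)"
    and S: "finite S" "card S = m" "m \<ge> 2"
    and \<C>: "\<C> \<subseteq> Pow ([S]\<^bsup>2\<^esup>)" "is_code \<H> \<C>" "\<forall>x\<in>\<C>. even (card x) = b"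
  shows "2 * real (card \<C>) \<le> delta m \<H> * 2 ^ (m choose 2)"
proof -
  have "[S]\<^bsup>2\<^esup> \<noteq> {}"
    using S by (simp add: nsets_eq_empty_iff)
  then obtain e where e: "e \<in> [S]\<^bsup>2\<^esup>"
    by blast
  let ?t = "\<lambda>x. gsum x {e}"
  have fin: "finite ([S]\<^bsup>2\<^esup>)" "\<forall>e\<in>[S]\<^bsup>2\<^esup>. card e = 2"
    using S(1) by (auto simp: finite_imp_finite_nsets nsets_def)
  have "finite x" if "x \<in> \<C>" for x
    using that \<C>(1) fin(1) finite_subset by blast
  then have "even (card (?t x)) \<longleftrightarrow> \<not> b" if "x \<in> \<C>" for x
    using even_card_gsum[of x "{e}"] \<C>(3) that by simp
  then have "\<C> \<inter> ?t ` \<C> = {}"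
    using \<C>(3) by blast
  moreover have "inj_on ?t \<C>"
    by (rule inj_onI) (metis gsum_gsum_cancel)
  moreover have "finite \<C>"
    using \<C>(1) fin(1) finite_subset by blast
  ultimately have "card (\<C> \<union> ?t ` \<C>) = 2 * card \<C>"
    by (simp add: card_Un_disjoint card_image)
  moreover have "\<C> \<union> ?t ` \<C> \<subseteq> Pow ([S]\<^bsup>2\<^esup>)"
    using \<C>(1) e by (auto simp: gsum_def)
  moreover have "is_code \<H> (\<C> \<union> ?t ` \<C>)"
    using is_code_parity_double[OF \<H> fin e \<C>] .
  ultimately show ?thesis
    using card_code_le_delta[OF S(1,2), of "\<C> \<union> ?t ` \<C>"] by simp
qed

lemma card_fiber_le_delta:
  assumes "finite R" and "card R = m" and "is_code \<H> \<A>"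
  shows "real (card (fiber \<A> ([R]\<^bsup>2\<^esup>) y)) \<le> delta m \<H> * 2 ^ (m choose 2)"
proof -
  let ?r = "\<lambda>x. x \<inter> [R]\<^bsup>2\<^esup>"
  have "real (card (?r ` fiber \<A> ([R]\<^bsup>2\<^esup>) y)) \<le> delta m \<H> * 2 ^ (m choose 2)"
    by (rule card_code_le_delta[OF assms(1,2) _ is_code_Int_fiber[OF assms(3)]]) blast
  then show ?thesis
    by (simp add: card_image[OF inj_on_Int_fiber])
qed

lemma card_parity_fiber_le_delta:
  assumes \<H>: "\<forall>H\<in>\<H>. loopless_graph H \<and> even (card H)"
    and R: "finite R" "card R = m" "m \<ge> 2" and "is_code \<H> \<A>"
    and parity: "\<forall>x\<in>fiber \<A> ([R]\<^bsup>2\<^esup>) y. even (card (x \<inter> [R]\<^bsup>2\<^esup>)) = b"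
  shows "2 * real (card (fiber \<A> ([R]\<^bsup>2\<^esup>) y)) \<le> delta m \<H> * 2 ^ (m choose 2)"
proof -
  let ?r = "\<lambda>x. x \<inter> [R]\<^bsup>2\<^esup>"
  have "2 * real (card (?r ` fiber \<A> ([R]\<^bsup>2\<^esup>) y)) \<le> delta m \<H> * 2 ^ (m choose 2)"
    by (rule card_parity_code_le_delta[OF \<H> R _ is_code_Int_fiber[OF assms(5)]])
      (use parity in blast)+
  then show ?thesis
    by (simp add: card_image[OF inj_on_Int_fiber])
qed

lemma card_le_by_fibers:
  assumes "finite T" and "(\<lambda>x. x - K) ` \<A> \<subseteq> T"
    and "\<forall>y\<in>T. real (card (fiber \<A> K y)) \<le> B"
  shows "real (card \<A>) \<le> B * card T"
proof -
  have "\<A> = (\<Union>y\<in>T. fiber \<A> K y)"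
    using assms(2) by (auto simp: fiber_def)
  then have "real (card \<A>) \<le> (\<Sum>y\<in>T. real (card (fiber \<A> K y)))"
    using card_UN_le[OF assms(1), of "fiber \<A> K"] by (metis of_nat_le_iff of_nat_sum)
  also have "\<dots> \<le> B * card T"
    using sum_mono[of T _ "\<lambda>_. B"] assms(3) by (simp add: mult.commute)
  finally show ?thesis .
qed

lemma card_edges_split:
  assumes "R \<subseteq> {1..n}" and "card R = m"
  shows "card (edges n) = (m choose 2) + card (edges n - [R]\<^bsup>2\<^esup>)"
proof -
  have "[R]\<^bsup>2\<^esup> \<subseteq> edges n"
    using assms(1) by (auto simp: edges_eq_nsets nsets_def)
  moreover have "card ([R]\<^bsup>2\<^esup>) = m choose 2"
    using assms(2) by simp
  ultimately show ?thesis
    using card_Diff_subset[OF finite_subset[OF _ finite_edges]] card_mono[OF finite_edges]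
    by (metis add_diff_inverse_nat not_le)
qed

lemma prob_le_delta_of_le:
  assumes "m \<le> n" and "\<G> \<subseteq> Pow (edges n)" and "is_code \<H> \<G>"
  shows "prob n \<G> \<le> delta m \<H>"
proof -
  let ?U = "edges n - [{1..m}]\<^bsup>2\<^esup>"
  have "finite ?U"
    using finite_edges by blast
  have "real (card \<G>) \<le> delta m \<H> * 2 ^ (m choose 2) * card (Pow ?U)"
  proof (rule card_le_by_fibers)
    show "(\<lambda>x. x - [{1..m}]\<^bsup>2\<^esup>) ` \<G> \<subseteq> Pow ?U"
      using assms(2) by blast
    show "\<forall>y\<in>Pow ?U. real (card (fiber \<G> ([{1..m}]\<^bsup>2\<^esup>) y)) \<le> delta m \<H> * 2 ^ (m choose 2)"
      using card_fiber_le_delta[OF _ _ assms(3)] by simp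
  qed (use \<open>finite ?U\<close> in simp)
  also have "\<dots> = delta m \<H> * 2 ^ card (edges n)"
    using card_edges_split[of "{1..m}" n m] assms(1) \<open>finite ?U\<close>
    by (simp add: card_Pow power_add)
  finally show ?thesis
    by (simp add: prob_def divide_le_eq)
qed

section \<open>Parity classes\<close>

definition parity_class :: "'a set set set \<Rightarrow> 'a set set \<Rightarrow> bool \<Rightarrow> 'a set set set" where
  "parity_class X \<xi> b = {x \<in> X. even (card (x \<inter> \<xi>)) = b}"

lemma parity_class_empty: "parity_class X {} True = X" "parity_class X {} False = {}"
  by (auto simp: parity_class_def)

lemma card_parity_classes:
  assumes "finite X"
  shows "card (parity_class X \<xi> True) + card (parity_class X \<xi> False) = card X"
proof -
  have "X = parity_class X \<xi> True \<union> parity_class X \<xi> False"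
    by (auto simp: parity_class_def)
  also have "card \<dots> = card (parity_class X \<xi> True) + card (parity_class X \<xi> False)"
    by (rule card_Un_disjoint) (use assms in \<open>auto simp: parity_class_def\<close>)
  finally show ?thesis
    by simp
qed

lemma card_parity_class_Pow:
  assumes "finite U" and "\<xi> \<subseteq> U" and "\<xi> \<noteq> {}"
  shows "2 * card (parity_class (Pow U) \<xi> b) = 2 ^ card U"
proof -
  obtain e where e: "e \<in> \<xi>"
    using assms(3) by blast
  let ?t = "\<lambda>y. gsum y {e}"
  have flip: "even (card (?t y \<inter> \<xi>)) \<longleftrightarrow> \<not> even (card (y \<inter> \<xi>))" if "y \<subseteq> U" for y
  proof -
    have "?t y \<inter> \<xi> = gsum (y \<inter> \<xi>) {e}"
      using e by (auto simp: gsum_def)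
    moreover have "finite (y \<inter> \<xi>)"
      using that assms(1) finite_subset by blast
    ultimately show ?thesis
      using even_card_gsum[of "y \<inter> \<xi>" "{e}"] by simp
  qed
  have maps_to: "?t \<in> parity_class (Pow U) \<xi> c \<rightarrow> parity_class (Pow U) \<xi> (\<not> c)" for c
  proof
    fix y assume "y \<in> parity_class (Pow U) \<xi> c"
    then have "y \<subseteq> U" and "even (card (y \<inter> \<xi>)) = c"
      by (simp_all add: parity_class_def)
    moreover have "?t y \<subseteq> U"
      using \<open>y \<subseteq> U\<close> e assms(2) by (auto simp: gsum_def)
    ultimately show "?t y \<in> parity_class (Pow U) \<xi> (\<not> c)"
      using flip by (simp add: parity_class_def)
  qed
  have "bij_betw ?t (parity_class (Pow U) \<xi> True) (parity_class (Pow U) \<xi> False)"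
    using maps_to[of True] maps_to[of False]
    by (intro bij_betwI[of _ _ _ ?t]) (simp_all add: gsum_gsum_cancel)
  then have "card (parity_class (Pow U) \<xi> True) = card (parity_class (Pow U) \<xi> False)"
    by (rule bij_betw_same_card)
  moreover have "card (parity_class (Pow U) \<xi> True) + card (parity_class (Pow U) \<xi> False) = 2 ^ card U"
    using card_parity_classes[of "Pow U" \<xi>] assms(1) by (simp add: card_Pow)
  ultimately show ?thesis
    by (cases b) simp_all
qed

lemma even_card_Int_split:
  assumes "K \<subseteq> \<xi>" and "finite x"
  shows "even (card (x \<inter> \<xi>)) \<longleftrightarrow> (even (card (x \<inter> K)) \<longleftrightarrow> even (card ((x - K) \<inter> \<xi>)))"
proof -
  have "x \<inter> \<xi> = (x \<inter> K) \<union> ((x - K) \<inter> \<xi>)"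
    using assms(1) by blast
  also have "card \<dots> = card (x \<inter> K) + card ((x - K) \<inter> \<xi>)"
    by (rule card_Un_disjoint) (use assms(2) in auto)
  finally show ?thesis
    by simp
qed

lemma card_parity_class_le_delta_clique:
  assumes \<H>: "\<forall>H\<in>\<H>. loopless_graph H \<and> even (card H)"
    and R: "R \<subseteq> {1..n}" "card R = m" "m \<ge> 2" and "[R]\<^bsup>2\<^esup> \<subseteq> \<xi>"
    and \<G>: "\<G> \<subseteq> Pow (edges n)" "is_code \<H> \<G>"
  shows "2 * real (card (parity_class \<G> \<xi> b)) \<le> delta m \<H> * 2 ^ card (edges n)"
proof -
  let ?K = "[R]\<^bsup>2\<^esup>" and ?\<A> = "parity_class \<G> \<xi> b"
  let ?U = "edges n - ?K"
  have "finite R"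
    using R(1) finite_subset by blast
  have "finite ?U"
    using finite_edges by blast
  have "is_code \<H> ?\<A>"
    by (rule is_code_subset[OF \<G>(2)]) (auto simp: parity_class_def)
  have "real (card ?\<A>) \<le> (delta m \<H> * 2 ^ (m choose 2) / 2) * card (Pow ?U)"
  proof (rule card_le_by_fibers)
    show "(\<lambda>x. x - ?K) ` ?\<A> \<subseteq> Pow ?U"
      using \<G>(1) by (auto simp: parity_class_def)
    show "\<forall>y\<in>Pow ?U. real (card (fiber ?\<A> ?K y)) \<le> delta m \<H> * 2 ^ (m choose 2) / 2"
    proof
      fix y
      have "even (card (x \<inter> ?K)) = (even (card (y \<inter> \<xi>)) = b)" if "x \<in> fiber ?\<A> ?K y" for x
      proof -
        have x: "x \<in> \<G>" "even (card (x \<inter> \<xi>)) = b" "y = x - ?K"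
          using that by (auto simp: fiber_def parity_class_def)
        then have "finite x"
          using \<G>(1) finite_edges finite_subset by blast
        with x show ?thesis
          using even_card_Int_split[OF \<open>?K \<subseteq> \<xi>\<close>] by blast
      qed
      then have "2 * real (card (fiber ?\<A> ?K y)) \<le> delta m \<H> * 2 ^ (m choose 2)"
        using card_parity_fiber_le_delta[OF \<H> \<open>finite R\<close> R(2,3) \<open>is_code \<H> ?\<A>\<close>,
            where b = "even (card (y \<inter> \<xi>)) = b"] by blast
      then show "real (card (fiber ?\<A> ?K y)) \<le> delta m \<H> * 2 ^ (m choose 2) / 2"
        by simp
    qed
  qed (use \<open>finite ?U\<close> in simp)
  also have "\<dots> = delta m \<H> * 2 ^ card (edges n) / 2"
    using card_edges_split[OF R(1,2)] \<open>finite ?U\<close> by (simp add: card_Pow power_add)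
  finally show ?thesis
    by simp
qed

lemma card_parity_class_le_delta_indep:
  assumes R: "R \<subseteq> {1..n}" "card R = m" and "[R]\<^bsup>2\<^esup> \<inter> \<xi> = {}"
    and \<xi>: "\<xi> \<subseteq> edges n" "\<xi> \<noteq> {}"
    and \<G>: "\<G> \<subseteq> Pow (edges n)" "is_code \<H> \<G>"
  shows "2 * real (card (parity_class \<G> \<xi> b)) \<le> delta m \<H> * 2 ^ card (edges n)"
proof -
  let ?K = "[R]\<^bsup>2\<^esup>" and ?\<A> = "parity_class \<G> \<xi> b"
  let ?U = "edges n - ?K"
  let ?T = "parity_class (Pow ?U) \<xi> b"
  have "finite R"
    using R(1) finite_subset by blast
  have "finite ?U"
    using finite_edges by blast
  have "is_code \<H> ?\<A>"
    by (rule is_code_subset[OF \<G>(2)]) (auto simp: parity_class_def)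
  have "real (card ?\<A>) \<le> (delta m \<H> * 2 ^ (m choose 2)) * card ?T"
  proof (rule card_le_by_fibers)
    have "(x - ?K) \<inter> \<xi> = x \<inter> \<xi>" for x
      using \<open>?K \<inter> \<xi> = {}\<close> by blast
    then show "(\<lambda>x. x - ?K) ` ?\<A> \<subseteq> ?T"
      using \<G>(1) by (auto simp: parity_class_def)
    show "finite ?T"
      using \<open>finite ?U\<close> by (simp add: parity_class_def)
    show "\<forall>y\<in>?T. real (card (fiber ?\<A> ?K y)) \<le> delta m \<H> * 2 ^ (m choose 2)"
      using card_fiber_le_delta[OF \<open>finite R\<close> R(2) \<open>is_code \<H> ?\<A>\<close>] by blast
  qed
  have "2 * card ?T = 2 ^ card ?U"
    by (rule card_parity_class_Pow[OF \<open>finite ?U\<close> _ \<xi>(2)]) (use \<xi>(1) \<open>?K \<inter> \<xi> = {}\<close> in blast)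
  then have "2 * real (card ?T) = 2 ^ card ?U"
    by (metis of_nat_mult of_nat_numeral of_nat_power)
  have "2 * real (card ?\<A>) \<le> 2 * ((delta m \<H> * 2 ^ (m choose 2)) * card ?T)"
    using \<open>real (card ?\<A>) \<le> _\<close> by simp
  also have "\<dots> = (delta m \<H> * 2 ^ (m choose 2)) * 2 ^ card ?U"
    using \<open>2 * real (card ?T) = _\<close> by (metis mult.left_commute)
  finally show ?thesis
    using card_edges_split[OF R(1,2)] by (simp add: power_add mult.assoc)
qed

lemma ramsey2_binomial:
  fixes V :: "'a set" and E :: "'a set set"
  assumes "finite V" and "(m + m) choose m \<le> card V"
  shows "\<exists>R\<subseteq>V. card R = m \<and> (clique R E \<or> indep R E)"
proof -
  let ?N = "(m + m) choose m"
  have N: "partn_lst {..<?N} [m, m] 2"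
    using ramsey2_full[of 2 m m] by (simp add: ES2_choose)
  obtain v where v: "inj_on v {..<?N}" "v ` {..<?N} \<subseteq> V"
    using assms card_le_inj[of "{..<?N}" V] by auto
  define f where "f e = (if v ` e \<in> E then 0 else Suc 0)" for e
  have "f \<in> [{..<?N}]\<^bsup>2\<^esup> \<rightarrow> {..<Suc (Suc 0)}"
    by (simp add: f_def)
  then obtain i U where i: "i < 2" and mono: "f ` [U]\<^bsup>2\<^esup> \<subseteq> {i}"
    and U: "U \<in> nsets {..<?N} ([m, m] ! i)"
    using N numeral_2_eq_2 by (auto simp: partn_lst_def monochromatic_def)
  have "card (v ` U) = m \<and> clique (v ` U) E \<or> card (v ` U) = m \<and> indep (v ` U) E"
    using i unfolding numeral_2_eq_2
    using mono U v unfolding image_subset_iff nsets_2_eq clique_def indep_def less_Suc_eq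
    by (auto simp: f_def nsets_def card_image inj_on_subset split: if_splits)
  moreover have "v ` U \<subseteq> V"
    using U v by (auto simp: nsets_def)
  ultimately show ?thesis
    by blast
qed

lemma nsets_2_subset_if_clique: "clique R E \<Longrightarrow> [R]\<^bsup>2\<^esup> \<subseteq> E"
  by (auto simp: clique_def nsets_2_eq)

lemma nsets_2_disjoint_if_indep: "indep R E \<Longrightarrow> [R]\<^bsup>2\<^esup> \<inter> E = {}"
  by (auto simp: indep_def nsets_2_eq)

lemma card_parity_class_le_delta:
  assumes \<H>: "\<forall>H\<in>\<H>. loopless_graph H \<and> even (card H)"
    and "m \<ge> 2" and "4 ^ m \<le> n" and \<xi>: "\<xi> \<subseteq> edges n" "\<xi> \<noteq> {}"
    and \<G>: "\<G> \<subseteq> Pow (edges n)" "is_code \<H> \<G>"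
  shows "2 * real (card (parity_class \<G> \<xi> b)) \<le> delta m \<H> * 2 ^ card (edges n)"
proof -
  have "(m + m) choose m \<le> (4::nat) ^ m"
    using binomial_le_pow2[of "m + m" m] by (simp add: power_add power_mult_distrib[symmetric])
  then obtain R where R: "R \<subseteq> {1..n}" "card R = m" and "clique R \<xi> \<or> indep R \<xi>"
    using ramsey2_binomial[of "{1..n}" m \<xi>] assms(3) by auto
  from \<open>clique R \<xi> \<or> indep R \<xi>\<close> show ?thesis
  proof
    assume "clique R \<xi>"
    then show ?thesis
      by (rule card_parity_class_le_delta_clique[OF \<H> R \<open>m \<ge> 2\<close> nsets_2_subset_if_clique \<G>])
  next
    assume "indep R \<xi>"
    then show ?thesis
      by (rule card_parity_class_le_delta_indep[OF R nsets_2_disjoint_if_indep \<xi> \<G>])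
  qed
qed

section \<open>Fourier coefficients\<close>

lemma fourier_diff: "fourier n (\<lambda>x. f x - g x) \<xi> = fourier n f \<xi> - fourier n g \<xi>"
  by (simp add: fourier_def left_diff_distrib sum_subtractf diff_divide_distrib)

lemma sum_sign_eq_parity_classes:
  assumes "finite X"
  shows "(\<Sum>x\<in>X. (-1::real) ^ card (x \<inter> \<xi>))
    = real (card (parity_class X \<xi> True)) - real (card (parity_class X \<xi> False))"
proof -
  let ?s = "\<lambda>x. (-1::real) ^ card (x \<inter> \<xi>)"
  have X: "X = parity_class X \<xi> True \<union> parity_class X \<xi> False"
    by (auto simp: parity_class_def)
  have "sum ?s X = sum ?s (parity_class X \<xi> True) + sum ?s (parity_class X \<xi> False)"
    by (subst X, rule sum.union_disjoint) (use assms in \<open>auto simp: parity_class_def\<close>)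
  also have "\<dots> = (\<Sum>x\<in>parity_class X \<xi> True. 1) + (\<Sum>x\<in>parity_class X \<xi> False. -1)"
    by (intro arg_cong2[where f = "(+)"] sum.cong) (auto simp: parity_class_def)
  finally show ?thesis
    by simp
qed

lemma fourier_indicator:
  assumes "\<G> \<subseteq> Pow (edges n)"
  shows "fourier n (\<lambda>x. if x \<in> \<G> then 1 else 0) \<xi>
    = (real (card (parity_class \<G> \<xi> True)) - real (card (parity_class \<G> \<xi> False))) / 2 ^ card (edges n)"
proof -
  let ?s = "\<lambda>x. (-1::real) ^ card (x \<inter> \<xi>)"
  have "(\<Sum>x\<in>Pow (edges n). (if x \<in> \<G> then 1 else 0) * ?s x) = (\<Sum>x\<in>Pow (edges n). if x \<in> \<G> then ?s x else 0)"
    by (rule sum.cong) simp_all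
  also have "\<dots> = sum ?s (Pow (edges n) \<inter> \<G>)"
    by (rule sum.inter_restrict[symmetric]) (simp add: finite_edges)
  also have "Pow (edges n) \<inter> \<G> = \<G>"
    using assms by blast
  finally show ?thesis
    using sum_sign_eq_parity_classes[of \<G> \<xi>] assms finite_edges
    by (simp add: fourier_def finite_subset)
qed

lemma fourier_const:
  assumes "\<xi> \<subseteq> edges n"
  shows "fourier n (\<lambda>_. c) \<xi> = (if \<xi> = {} then c else 0)"
proof -
  have "fourier n (\<lambda>_. c) \<xi> = c * fourier n (\<lambda>x. if x \<in> Pow (edges n) then 1 else 0) \<xi>"
    by (simp add: fourier_def sum_distrib_left)
  also have "\<dots> = c * (real (card (parity_class (Pow (edges n)) \<xi> True))
      - real (card (parity_class (Pow (edges n)) \<xi> False))) / 2 ^ card (edges n)"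
    using fourier_indicator[of "Pow (edges n)" n \<xi>] by simp
  also have "\<dots> = (if \<xi> = {} then c else 0)"
  proof (cases "\<xi> = {}")
    case True
    then show ?thesis
      by (simp add: parity_class_empty card_Pow finite_edges)
  next
    case False
    then have "card (parity_class (Pow (edges n)) \<xi> True) = card (parity_class (Pow (edges n)) \<xi> False)"
      using card_parity_class_Pow[OF finite_edges assms] by (metis mult_left_cancel zero_neq_numeral)
    with False show ?thesis
      by simp
  qed
  finally show ?thesis .
qed

lemma linf_fourier_le:
  assumes "\<And>\<xi>. \<xi> \<subseteq> edges n \<Longrightarrow> \<bar>fourier n f \<xi>\<bar> \<le> c"
  shows "linf_fourier n f \<le> c"
proof -
  have "{\<bar>fourier n f \<xi>\<bar> | \<xi>. \<xi> \<subseteq> edges n} = (\<lambda>\<xi>. \<bar>fourier n f \<xi>\<bar>) ` Pow (edges n)"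
    by auto
  then show ?thesis
    unfolding linf_fourier_def using assms finite_edges by (auto intro!: Max.boundedI)
qed

lemma abs_fourier_code_le:
  assumes \<H>: "\<forall>H\<in>\<H>. loopless_graph H \<and> even (card H)"
    and "m \<ge> 2" and "4 ^ m \<le> n" and "\<xi> \<subseteq> edges n"
    and \<G>: "\<G> \<subseteq> Pow (edges n)" "is_code \<H> \<G>"
  shows "\<bar>fourier n (\<lambda>x. (if x \<in> \<G> then 1 else 0) - prob n \<G>) \<xi>\<bar> \<le> delta m \<H> - prob n \<G>"
proof -
  let ?a = "real (card (parity_class \<G> \<xi> True))" and ?b = "real (card (parity_class \<G> \<xi> False))"
  let ?M = "2 ^ card (edges n) :: real"
  have fourier: "fourier n (\<lambda>x. (if x \<in> \<G> then 1 else 0) - prob n \<G>) \<xi>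
      = (?a - ?b) / ?M - (if \<xi> = {} then prob n \<G> else 0)"
    using fourier_diff fourier_indicator[OF \<G>(1)] fourier_const[OF \<open>\<xi> \<subseteq> edges n\<close>] by simp
  have prob: "prob n \<G> = (?a + ?b) / ?M"
    using card_parity_classes[of \<G> \<xi>] \<G>(1) finite_edges
    by (simp add: prob_def finite_subset flip: of_nat_add)
  show ?thesis
  proof (cases "\<xi> = {}")
    case True
    have "m \<le> n"
      using less_exp[of m] power_mono[of "2::nat" 4 m] assms(3) by linarith
    with True show ?thesis
      using fourier prob prob_le_delta_of_le[OF _ \<G>] by (simp add: parity_class_empty)
  next
    case False
    have "2 * ?a \<le> delta m \<H> * ?M" and "2 * ?b \<le> delta m \<H> * ?M"
      using card_parity_class_le_delta[OF \<H> assms(2-4) False \<G>] by blast+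
    then have "\<bar>?a - ?b\<bar> / ?M \<le> (delta m \<H> * ?M - (?a + ?b)) / ?M"
      by (intro divide_right_mono) (simp_all add: abs_le_iff)
    moreover have "\<bar>(?a - ?b) / ?M\<bar> = \<bar>?a - ?b\<bar> / ?M"
      by (simp add: abs_divide)
    moreover have "(delta m \<H> * ?M - (?a + ?b)) / ?M = delta m \<H> - prob n \<G>"
      unfolding prob by (simp add: diff_divide_distrib)
    ultimately show ?thesis
      using False fourier by simp
  qed
qed

theorem lemma3p4:
  fixes \<H> :: "'b set set set" and n m :: nat and \<G> :: "nat set set set"
  assumes "\<forall>H\<in>\<H>. loopless_graph H \<and> H \<noteq> {} \<and> even (card H)"
    and "n \<ge> 2" and "m \<ge> 2" and "n \<ge> 4 ^ m"
    and "\<G> \<subseteq> Pow (edges n)" and "is_code \<H> \<G>"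
    and "prob n \<G> = delta n \<H>"
  shows "linf_fourier n (\<lambda>x. (if x \<in> \<G> then 1 else 0) - prob n \<G>) \<le> delta m \<H> - delta n \<H>"
proof (rule linf_fourier_le)
  have \<H>: "\<forall>H\<in>\<H>. loopless_graph H \<and> even (card H)"
    using assms(1) by blast
  show "\<bar>fourier n (\<lambda>x. (if x \<in> \<G> then 1 else 0) - prob n \<G>) \<xi>\<bar> \<le> delta m \<H> - delta n \<H>"
    if "\<xi> \<subseteq> edges n" for \<xi>
    using abs_fourier_code_le[OF \<H> assms(3,4) that assms(5,6)] assms(7) by simp
qed

end
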